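(* Suppose $0\le\alpha_3\le\alpha_2\le\alpha_1\le\pi/4$, and define $\zeta_0=\cos\alpha_1\cos\alpha_2\cos\alpha_3-\mathrm{i}\sin\alpha_1\sin\alpha_2\sin\alpha_3$, $\zeta_1=\cos\alpha_1\sin\alpha_2\sin\alpha_3-\mathrm{i}\sin\alpha_1\cos\alpha_2\cos\alpha_3$, $\zeta_2=\sin\alpha_1\cos\alpha_2\sin\alpha_3-\mathrm{i}\cos\alpha_1\sin\alpha_2\cos\alpha_3$, $\zeta_3=\sin\alpha_1\sin\alpha_2\cos\alpha_3-\mathrm{i}\cos\alpha_1\cos\alpha_2\sin\alpha_3$. Then $|\zeta_0|>|\zeta_1|=|\zeta_2|=|\zeta_3|>0$ if and only if $0<\alpha_3=\alpha_2=\alpha_1<\pi/4$.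
   Context: The numbers $|\zeta_k|$ are the four Schmidt coefficients of the two-qubit unitary $U(\alpha_1,\alpha_2,\alpha_3)=\exp[-\mathrm{i}\sum_{k=1}^3\alpha_k\sigma_k\otimes\sigma_k]=\sum_{k=0}^3\zeta_k\sigma_k\otimes\sigma_k$ ($\sigma_0=I$, $\sigma_k$ Pauli matrices). *)

theory Defs
  imports Complex_Main
begin

text \<open>The coefficients zeta_k (k = 0..3) of the two-qubit unitary
  U(a1,a2,a3) in the Pauli product basis.\<close>
definition zeta :: "nat \<Rightarrow> real \<Rightarrow> real \<Rightarrow> real \<Rightarrow> complex" where
  "zeta k a1 a2 a3 =
     (if k = 0 then Complex (cos a1 * cos a2 * cos a3) (- (sin a1 * sin a2 * sin a3))
      else if k = 1 then Complex (cos a1 * sin a2 * sin a3) (- (sin a1 * cos a2 * cos a3))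
      else if k = 2 then Complex (sin a1 * cos a2 * sin a3) (- (cos a1 * sin a2 * cos a3))
      else Complex (sin a1 * sin a2 * cos a3) (- (cos a1 * cos a2 * sin a3)))"

end

theory Submission
  imports Defs
begin

text \<open>The gaps between consecutive squared moduli factor as
  \<open>|\<zeta>\<^sub>0|\<^sup>2 - |\<zeta>\<^sub>1|\<^sup>2 = cos 2\<alpha>\<^sub>1 cos (\<alpha>\<^sub>2 + \<alpha>\<^sub>3) cos (\<alpha>\<^sub>2 - \<alpha>\<^sub>3)\<close>,
  \<open>|\<zeta>\<^sub>1|\<^sup>2 - |\<zeta>\<^sub>2|\<^sup>2 = cos 2\<alpha>\<^sub>3 (sin\<^sup>2 \<alpha>\<^sub>1 - sin\<^sup>2 \<alpha>\<^sub>2)\<close> and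
  \<open>|\<zeta>\<^sub>2|\<^sup>2 - |\<zeta>\<^sub>3|\<^sup>2 = cos 2\<alpha>\<^sub>1 (sin\<^sup>2 \<alpha>\<^sub>2 - sin\<^sup>2 \<alpha>\<^sub>3)\<close>.
  In the given range the first gap is positive exactly when \<open>\<alpha>\<^sub>1 < \<pi>/4\<close>; then
  \<open>cos 2\<alpha>\<^sub>1\<close> and \<open>cos 2\<alpha>\<^sub>3\<close> are positive, so the other two gaps vanish iff
  \<open>\<alpha>\<^sub>1 = \<alpha>\<^sub>2 = \<alpha>\<^sub>3 = \<alpha>\<close>, since \<open>sin\<close> is injective on \<open>[0, \<pi>/2]\<close>. Finally
  \<open>|\<zeta>\<^sub>3| = |sin 2\<alpha>|/2\<close> on the diagonal, which is positive iff \<open>\<alpha> > 0\<close>.\<close>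

lemma norm_less_iff_power2_less: "norm x < norm y \<longleftrightarrow> (norm x)\<^sup>2 < (norm y)\<^sup>2"
  by (simp flip: not_le)

lemma sin_power2_eq_iff:
  fixes x y :: real
  assumes "0 \<le> x" "x \<le> pi / 2" "0 \<le> y" "y \<le> pi / 2"
  shows "(sin x)\<^sup>2 = (sin y)\<^sup>2 \<longleftrightarrow> x = y"
proof -
  have "0 \<le> sin x" "0 \<le> sin y"
    using assms by (simp_all add: sin_ge_zero)
  then have "(sin x)\<^sup>2 = (sin y)\<^sup>2 \<longleftrightarrow> sin x = sin y"
    by simp
  also have "\<dots> \<longleftrightarrow> x = y"
    using assms sin_inj_pi[of x y] by auto
  finally show ?thesis .
qed

lemma norm_zeta0_power2_diff:
  "(cmod (zeta 0 a1 a2 a3))\<^sup>2 - (cmod (zeta 1 a1 a2 a3))\<^sup>2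
     = cos (2 * a1) * cos (a2 + a3) * cos (a2 - a3)"
  unfolding zeta_def cmod_power2 cos_double cos_add cos_diff
  by (simp add: algebra_simps power2_eq_square)

lemma norm_zeta1_power2_diff:
  "(cmod (zeta 1 a1 a2 a3))\<^sup>2 - (cmod (zeta 2 a1 a2 a3))\<^sup>2
     = cos (2 * a3) * ((sin a1)\<^sup>2 - (sin a2)\<^sup>2)"
  unfolding zeta_def cmod_power2 cos_double
  by (simp add: power_mult_distrib cos_squared_eq algebra_simps)

lemma norm_zeta2_power2_diff:
  "(cmod (zeta 2 a1 a2 a3))\<^sup>2 - (cmod (zeta 3 a1 a2 a3))\<^sup>2
     = cos (2 * a1) * ((sin a2)\<^sup>2 - (sin a3)\<^sup>2)"
  unfolding zeta_def cmod_power2 cos_double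
  by (simp add: power_mult_distrib cos_squared_eq algebra_simps)

lemma norm_zeta3_diagonal: "cmod (zeta 3 a a a) = \<bar>sin (2 * a)\<bar> / 2"
proof -
  have "(cmod (zeta 3 a a a))\<^sup>2 = (sin a * cos a)\<^sup>2"
    unfolding zeta_def cmod_power2 by (simp add: power_mult_distrib cos_squared_eq algebra_simps)
  then have "(cmod (zeta 3 a a a))\<^sup>2 = (\<bar>sin (2 * a)\<bar> / 2)\<^sup>2"
    by (simp add: sin_double power_divide power_mult_distrib)
  then show ?thesis
    by simp
qed

lemma norm_zeta1_less_norm_zeta0_iff:
  assumes "0 \<le> a3" "a3 \<le> a2" "a2 \<le> a1" "a1 \<le> pi / 4"
  shows "cmod (zeta 1 a1 a2 a3) < cmod (zeta 0 a1 a2 a3) \<longleftrightarrow> a1 < pi / 4"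
proof -
  have "cmod (zeta 1 a1 a2 a3) < cmod (zeta 0 a1 a2 a3)
          \<longleftrightarrow> 0 < cos (2 * a1) * cos (a2 + a3) * cos (a2 - a3)"
    unfolding norm_less_iff_power2_less norm_zeta0_power2_diff [symmetric] by linarith
  also have "\<dots> \<longleftrightarrow> a1 < pi / 4"
  proof
    assume "a1 < pi / 4"
    then have "0 < cos (2 * a1)" "0 < cos (a2 + a3)" "0 < cos (a2 - a3)"
      using assms by (intro cos_gt_zero_pi; linarith)+
    then show "0 < cos (2 * a1) * cos (a2 + a3) * cos (a2 - a3)"
      by simp
  next
    assume "0 < cos (2 * a1) * cos (a2 + a3) * cos (a2 - a3)"
    then have "cos (2 * a1) \<noteq> 0"
      by auto
    moreover have "cos (2 * (pi / 4)) = 0"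
      by simp
    ultimately have "a1 \<noteq> pi / 4"
      by metis
    then show "a1 < pi / 4"
      using assms(4) by simp
  qed
  finally show ?thesis .
qed

lemma norm_zeta1_eq_norm_zeta2_iff:
  assumes "cos (2 * a3) \<noteq> 0" "0 \<le> a1" "a1 \<le> pi / 2" "0 \<le> a2" "a2 \<le> pi / 2"
  shows "cmod (zeta 1 a1 a2 a3) = cmod (zeta 2 a1 a2 a3) \<longleftrightarrow> a1 = a2"
proof -
  have "cmod (zeta 1 a1 a2 a3) = cmod (zeta 2 a1 a2 a3)
          \<longleftrightarrow> (cmod (zeta 1 a1 a2 a3))\<^sup>2 - (cmod (zeta 2 a1 a2 a3))\<^sup>2 = 0"
    by simp
  also have "\<dots> \<longleftrightarrow> (sin a1)\<^sup>2 = (sin a2)\<^sup>2"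
    unfolding norm_zeta1_power2_diff using assms(1) by simp
  also have "\<dots> \<longleftrightarrow> a1 = a2"
    using assms(2-) by (rule sin_power2_eq_iff)
  finally show ?thesis .
qed

lemma norm_zeta2_eq_norm_zeta3_iff:
  assumes "cos (2 * a1) \<noteq> 0" "0 \<le> a2" "a2 \<le> pi / 2" "0 \<le> a3" "a3 \<le> pi / 2"
  shows "cmod (zeta 2 a1 a2 a3) = cmod (zeta 3 a1 a2 a3) \<longleftrightarrow> a2 = a3"
proof -
  have "cmod (zeta 2 a1 a2 a3) = cmod (zeta 3 a1 a2 a3)
          \<longleftrightarrow> (cmod (zeta 2 a1 a2 a3))\<^sup>2 - (cmod (zeta 3 a1 a2 a3))\<^sup>2 = 0"
    by simp
  also have "\<dots> \<longleftrightarrow> (sin a2)\<^sup>2 = (sin a3)\<^sup>2"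
    unfolding norm_zeta2_power2_diff using assms(1) by simp
  also have "\<dots> \<longleftrightarrow> a2 = a3"
    using assms(2-) by (rule sin_power2_eq_iff)
  finally show ?thesis .
qed

theorem lemma9:
  fixes a1 a2 a3 :: real
  assumes "0 \<le> a3" and "a3 \<le> a2" and "a2 \<le> a1" and "a1 \<le> pi / 4"
  shows "(cmod (zeta 0 a1 a2 a3) > cmod (zeta 1 a1 a2 a3) \<and>
          cmod (zeta 1 a1 a2 a3) = cmod (zeta 2 a1 a2 a3) \<and>
          cmod (zeta 2 a1 a2 a3) = cmod (zeta 3 a1 a2 a3) \<and>
          cmod (zeta 3 a1 a2 a3) > 0)
     \<longleftrightarrow> (0 < a3 \<and> a3 = a2 \<and> a2 = a1 \<and> a1 < pi / 4)"
proof -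
  have "cmod (zeta 1 a1 a2 a3) < cmod (zeta 0 a1 a2 a3) \<longleftrightarrow> a1 < pi / 4"
    using assms by (rule norm_zeta1_less_norm_zeta0_iff)
  moreover have "cmod (zeta 1 a1 a2 a3) = cmod (zeta 2 a1 a2 a3) \<longleftrightarrow> a1 = a2"
    and "cmod (zeta 2 a1 a2 a3) = cmod (zeta 3 a1 a2 a3) \<longleftrightarrow> a2 = a3"
    if "a1 < pi / 4"
  proof -
    have "0 < cos (2 * a1)" "0 < cos (2 * a3)"
      using assms that by (auto intro!: cos_gt_zero_pi)
    then show "cmod (zeta 1 a1 a2 a3) = cmod (zeta 2 a1 a2 a3) \<longleftrightarrow> a1 = a2"
      and "cmod (zeta 2 a1 a2 a3) = cmod (zeta 3 a1 a2 a3) \<longleftrightarrow> a2 = a3"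
      using assms that
      by (intro norm_zeta1_eq_norm_zeta2_iff norm_zeta2_eq_norm_zeta3_iff; simp)+
  qed
  moreover have "0 < cmod (zeta 3 a1 a2 a3) \<longleftrightarrow> 0 < a3"
    if "a1 < pi / 4" "a3 = a2" "a2 = a1"
  proof -
    have "sin (2 * a3) = 0 \<longleftrightarrow> a3 = 0"
      using sin_zero_pi_iff[of "2 * a3"] assms that by auto
    then show ?thesis
      using assms that by (auto simp: norm_zeta3_diagonal)
  qed
  ultimately show ?thesis
    by blast
qed

end
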